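(* Let $\mathcal{X},\mathcal{Y}$ be topological spaces with $\mathcal{X}$ connected and simply connected, let $\phi:\mathcal{X}\to\mathbb{R}^m$ be continuous and injective, let $\rho:\mathbb{R}^n\to\mathcal{Y}$ be a continuous surjection admitting a section (a continuous $s:\mathcal{Y}\to\mathbb{R}^n$ with $\rho\circ s=1_{\mathcal{Y}}$), and let $\mathcal{F}$ be dense in $C(\mathbb{R}^m,\mathbb{R}^n)$ for the topology of uniform convergence on compacts. Then $\{\rho\circ f\circ\phi: f\in\mathcal{F}\}$ is dense in $C(\mathcal{X},\mathcal{Y})$ equipped with the compact-open topology.
   Context: The compact-open topology on $C(\mathcal{X},\mathcal{Y})$ is generated by the sets $\{f: f(K)\subseteq O\}$ with $K\subseteq\mathcal{X}$ compact and $O\subseteq\mathcal{Y}$ open. *)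

theory Defs
  imports "HOL-Analysis.Analysis"
begin

text \<open>Simply connected topological space: the abstract-topology analogue of the
library notion simply_connected (all loops are homotopic as loops).  For a
nonempty space this is equivalent to: path connected with trivial fundamental group.\<close>
definition simply_connected_space :: "'a topology \<Rightarrow> bool" where
  "simply_connected_space X \<equiv>
     \<forall>p q. pathin X p \<and> p 1 = p 0 \<and> pathin X q \<and> q 1 = q 0
       \<longrightarrow> homotopic_with (\<lambda>r. r 1 = r 0) (subtopology euclideanreal {0..1}) X p q"

definition compact_open :: "'a topology \<Rightarrow> 'b topology \<Rightarrow> ('a \<Rightarrow> 'b) topology" where
  "compact_open X Y =
     subtopology
       (topology_generated_by {{f. f ` K \<subseteq> U} | K U. compactin X K \<and> openin Y U})
       {f. continuous_map X Y f}"

definition dense_ucc :: "(real^'m \<Rightarrow> real^'n) set \<Rightarrow> bool" where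
  "dense_ucc F \<equiv> F \<subseteq> {f. continuous_on UNIV f} \<and>
     (\<forall>g K e. continuous_on UNIV g \<and> compact K \<and> e > 0 \<longrightarrow>
        (\<exists>f\<in>F. \<forall>x\<in>K. dist (f x) (g x) < e))"

end

theory Submission
  imports Defs
begin

text \<open>A basic neighbourhood of g in the compact-open topology prescribes g(K_i) \<subseteq> U_i
for finitely many compact K_i and open U_i.  On the compact set K = \<Union>K_i the injection \<phi>
is an embedding, so s \<circ> g \<circ> \<phi>^-1 is continuous on the compact set \<phi>(K) and extends
(Tietze) to a continuous h on the whole space.  Each \<rho>^-1(U_i) is an open neighbourhood
of the compact set s(g(K_i)), hence contains a uniform e-neighbourhood of it; so any
f \<in> F that is e-close to h on \<phi>(K) yields \<rho> \<circ> f \<circ> \<phi> in the same neighbourhood.\<close>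

lemma finite_subset_binary_image:
  assumes "finite \<F>" and "\<F> \<subseteq> {S a b | a b. P a b}"
  obtains A where "finite A" "\<forall>(a, b)\<in>A. P a b" "\<F> = (\<lambda>(a, b). S a b) ` A"
proof -
  have "\<F> \<subseteq> (\<lambda>(a, b). S a b) ` {(a, b). P a b}"
  proof
    fix V assume "V \<in> \<F>"
    then obtain a b where "V = S a b" "P a b"
      using assms(2) by blast
    then show "V \<in> (\<lambda>(a, b). S a b) ` {(a, b). P a b}"
      by (intro image_eqI[where x = "(a, b)"]) simp_all
  qed
  from finite_subset_image[OF assms(1) this] obtain A
    where "A \<subseteq> {(a, b). P a b}" "finite A" "\<F> = (\<lambda>(a, b). S a b) ` A"
    by (elim exE conjE)
  then show thesis
    by (intro that) auto
qed

lemma openin_topology_generated_by_finite_Inter: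
  assumes "openin (topology_generated_by \<S>) W" and "x \<in> W"
  obtains \<F> where "finite \<F>" "\<F> \<subseteq> \<S>" "x \<in> \<Inter>\<F>" "\<Inter>\<F> \<subseteq> W"
proof -
  have "generate_topology_on \<S> W"
    using assms(1) by (rule openin_topology_generated_by)
  then have "(arbitrary union_of finite' intersection_of (\<lambda>A. A \<in> \<S>)) W"
    by (simp add: generate_topology_on_eq)
  then obtain T where T: "(finite' intersection_of (\<lambda>A. A \<in> \<S>)) T" "x \<in> T" "T \<subseteq> W"
    using assms(2) unfolding union_of_def by blast
  then obtain \<F> where "finite \<F>" "\<F> \<subseteq> \<S>" "\<Inter>\<F> = T"
    unfolding intersection_of_def by blast
  then show thesis
    using T that by blast
qed

lemma closure_of_subtopology_generated_by_eq_topspace: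
  assumes "D \<subseteq> C"
    and "\<And>x \<F>. \<lbrakk>x \<in> C; finite \<F>; \<F> \<subseteq> \<S>; x \<in> \<Inter>\<F>\<rbrakk> \<Longrightarrow> \<exists>y\<in>D. y \<in> \<Inter>\<F>"
  shows "subtopology (topology_generated_by \<S>) C closure_of D
           = topspace (subtopology (topology_generated_by \<S>) C)"
proof (intro equalityI closure_of_subset_topspace subsetI)
  fix x assume x: "x \<in> topspace (subtopology (topology_generated_by \<S>) C)"
  show "x \<in> subtopology (topology_generated_by \<S>) C closure_of D"
    unfolding in_closure_of
  proof (intro conjI x allI impI)
    fix T assume "x \<in> T \<and> openin (subtopology (topology_generated_by \<S>) C) T"
    then obtain W where W: "openin (topology_generated_by \<S>) W" "T = W \<inter> C" "x \<in> W"
      by (auto simp: openin_subtopology)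
    obtain \<F> where \<F>: "finite \<F>" "\<F> \<subseteq> \<S>" "x \<in> \<Inter>\<F>" and "\<Inter>\<F> \<subseteq> W"
      using openin_topology_generated_by_finite_Inter[OF W(1,3)] .
    moreover have "x \<in> C"
      using x by simp
    ultimately obtain y where "y \<in> D" "y \<in> W"
      using assms(2)[OF _ \<F>] by blast
    then show "\<exists>y. y \<in> D \<and> y \<in> T"
      using W(2) assms(1) by blast
  qed
qed

lemma eventually_balls_subset_open:
  fixes C :: "'a::metric_space set"
  assumes "compact C" and "open V" and "C \<subseteq> V"
  shows "\<forall>\<^sub>F e in at_right 0. \<forall>x\<in>C. ball x e \<subseteq> V"
proof -
  obtain e where "e > 0" and e: "(\<Union>x\<in>C. ball x e) \<subseteq> V"
    using compact_subset_open_imp_ball_epsilon_subset[OF assms] .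
  have "\<forall>x\<in>C. ball x d \<subseteq> V" if "d < e" for d
    using e that by fastforce
  then show ?thesis
    using \<open>e > 0\<close> by (auto simp: eventually_at_right_field)
qed

lemma continuous_extension_through_injection_on_compact:
  fixes \<phi> :: "'a \<Rightarrow> 'c::{metric_space,second_countable_topology}"
    and u :: "'a \<Rightarrow> 'd::real_inner"
  assumes "compactin X K" and "continuous_map X euclidean \<phi>" and "inj_on \<phi> K"
    and "continuous_map X euclidean u"
  obtains h where "continuous_on UNIV h" "\<forall>x\<in>K. h (\<phi> x) = u x"
proof -
  have K: "K \<subseteq> topspace X"
    using assms(1) compactin_subset_topspace by blast
  have "continuous_map (subtopology euclidean (\<phi> ` K)) (subtopology X K) (inv_into K \<phi>)"
  proof (rule continuous_inverse_map)
    show "compact_space (subtopology X K)"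
      using assms(1) by (rule compact_space_subtopology)
    show "continuous_map (subtopology X K) euclidean \<phi>"
      using assms(2) by (rule continuous_map_from_subtopology)
  qed (use K assms(3) in auto)
  then have "continuous_map (subtopology euclidean (\<phi> ` K)) euclidean (u \<circ> inv_into K \<phi>)"
    using assms(4) continuous_map_compose continuous_map_from_subtopology by blast
  then have "continuous_on (\<phi> ` K) (u \<circ> inv_into K \<phi>)"
    by simp
  moreover have "compact (\<phi> ` K)"
    using image_compactin[OF assms(1,2)] by simp
  then have "closedin (top_of_set UNIV) (\<phi> ` K)"
    by (simp add: compact_imp_closed)
  ultimately obtain h where "continuous_on UNIV h" "\<And>y. y \<in> \<phi> ` K \<Longrightarrow> h y = (u \<circ> inv_into K \<phi>) y"
    by (rule Tietze_unbounded) blast+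
  then show thesis
    using that assms(3) by simp
qed

lemma compact_open_closure_of_eq_topspace:
  assumes "D \<subseteq> {f. continuous_map X Y f}"
    and "\<And>g A. \<lbrakk>continuous_map X Y g; finite A;
                 \<forall>(K, U)\<in>A. compactin X K \<and> openin Y U \<and> g ` K \<subseteq> U\<rbrakk>
                \<Longrightarrow> \<exists>f\<in>D. \<forall>(K, U)\<in>A. f ` K \<subseteq> U"
  shows "compact_open X Y closure_of D = topspace (compact_open X Y)"
  unfolding compact_open_def
proof (rule closure_of_subtopology_generated_by_eq_topspace[OF assms(1)])
  fix g \<F>
  assume g: "g \<in> {f. continuous_map X Y f}"
    and \<F>_subbasic: "finite \<F>" "\<F> \<subseteq> {{f. f ` K \<subseteq> U} | K U. compactin X K \<and> openin Y U}"
    and "g \<in> \<Inter>\<F>"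
  obtain A where A: "finite A" "\<forall>(K, U)\<in>A. compactin X K \<and> openin Y U"
      and \<F>: "\<F> = (\<lambda>(K, U). {f. f ` K \<subseteq> U}) ` A"
    using \<F>_subbasic by (rule finite_subset_binary_image)
  have "compactin X K \<and> openin Y U \<and> g ` K \<subseteq> U" if "(K, U) \<in> A" for K U
  proof -
    have "g \<in> (\<lambda>(K, U). {f. f ` K \<subseteq> U}) (K, U)"
      using \<open>g \<in> \<Inter>\<F>\<close> imageI[OF that] unfolding \<F> by (rule InterD)
    then show ?thesis
      using bspec[OF A(2) that] by simp
  qed
  then have gA: "\<forall>(K, U)\<in>A. compactin X K \<and> openin Y U \<and> g ` K \<subseteq> U"
    by auto
  have "continuous_map X Y g"
    using g by simp
  then obtain f where "f \<in> D" and f: "\<forall>(K, U)\<in>A. f ` K \<subseteq> U"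
    using assms(2)[OF _ A(1) gA] by blast
  have "f \<in> \<Inter>\<F>"
    using f unfolding \<F> by force
  then show "\<exists>y\<in>D. y \<in> \<Inter>\<F>"
    using \<open>f \<in> D\<close> by blast
qed

lemma dense_ucc_composite_approximates:
  fixes \<phi> :: "'a \<Rightarrow> real^'m" and \<rho> :: "real^'n \<Rightarrow> 'b"
    and F :: "(real^'m \<Rightarrow> real^'n) set"
  assumes \<phi>: "continuous_map X euclidean \<phi>" "inj_on \<phi> (topspace X)"
    and \<rho>: "continuous_map euclidean Y \<rho>"
    and s: "continuous_map Y euclidean s" "\<forall>y\<in>topspace Y. \<rho> (s y) = y"
    and "dense_ucc F"
    and g: "continuous_map X Y g"
    and A: "finite A" "\<forall>(K, U)\<in>A. compactin X K \<and> openin Y U \<and> g ` K \<subseteq> U"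
  obtains f where "f \<in> F" "\<forall>(K, U)\<in>A. (\<rho> \<circ> f \<circ> \<phi>) ` K \<subseteq> U"
proof -
  define C where "C = \<Union>(fst ` A)"
  have C: "compactin X C"
    unfolding C_def using A by (intro compactin_Union) auto
  have "inj_on \<phi> C"
    using \<phi>(2) compactin_subset_topspace[OF C] by (rule inj_on_subset)
  moreover have "continuous_map X euclidean (s \<circ> g)"
    using g s(1) by (rule continuous_map_compose)
  ultimately obtain h where h: "continuous_on UNIV h" "\<forall>x\<in>C. h (\<phi> x) = (s \<circ> g) x"
    by (rule continuous_extension_through_injection_on_compact[OF C \<phi>(1)])
  have "\<forall>\<^sub>F e in at_right 0. \<forall>x\<in>s ` g ` K. ball x e \<subseteq> \<rho> -` U"
    if "(K, U) \<in> A" for K U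
  proof (rule eventually_balls_subset_open)
    have K: "compactin X K" and U: "openin Y U" and gK: "g ` K \<subseteq> U"
      using bspec[OF A(2) that] by auto
    show "compact (s ` g ` K)"
      using image_compactin[OF image_compactin[OF K g] s(1)] by simp
    show "open (\<rho> -` U)"
      using openin_continuous_map_preimage[OF \<rho> U] by (simp add: vimage_def)
    show "s ` g ` K \<subseteq> \<rho> -` U"
      using gK s(2) compactin_subset_topspace[OF K] continuous_map_image_subset_topspace[OF g]
      by (auto simp: image_subset_iff subset_iff)
  qed
  then have "\<forall>\<^sub>F e in at_right 0. \<forall>(K, U)\<in>A. \<forall>x\<in>s ` g ` K. ball x e \<subseteq> \<rho> -` U"
    using A(1) by (auto intro: eventually_ball_finite)
  then obtain e where "e > 0" and e: "\<forall>(K, U)\<in>A. \<forall>x\<in>K. ball (s (g x)) e \<subseteq> \<rho> -` U"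
    by (auto simp: eventually_at_right_field dest: dense)
  have "compact (\<phi> ` C)"
    using image_compactin[OF C \<phi>(1)] by simp
  then obtain f where "f \<in> F" and f: "\<forall>y\<in>\<phi> ` C. dist (f y) (h y) < e"
    using \<open>dense_ucc F\<close> h(1) \<open>e > 0\<close> unfolding dense_ucc_def by blast
  have "(\<rho> \<circ> f \<circ> \<phi>) ` K \<subseteq> U" if "(K, U) \<in> A" for K U
  proof (rule image_subsetI)
    fix x assume "x \<in> K"
    then have "x \<in> C"
      using that unfolding C_def by force
    then have "f (\<phi> x) \<in> ball (s (g x)) e"
      using f h(2) by (simp add: dist_commute)
    then show "(\<rho> \<circ> f \<circ> \<phi>) x \<in> U"
      using e that \<open>x \<in> K\<close> by fastforce
  qed
  then show thesis
    using that \<open>f \<in> F\<close> by blast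
qed

theorem mainTheorem4:
  fixes X :: "'a topology" and Y :: "'b topology"
    and \<phi> :: "'a \<Rightarrow> real^'m" and \<rho> :: "real^'n \<Rightarrow> 'b"
    and F :: "(real^'m \<Rightarrow> real^'n) set"
  assumes "connected_space X" and "simply_connected_space X"
    and "continuous_map X euclidean \<phi>" and "inj_on \<phi> (topspace X)"
    and "continuous_map euclidean Y \<rho>" and "\<rho> ` UNIV = topspace Y"
    and "\<exists>s. continuous_map Y euclidean s \<and> (\<forall>y\<in>topspace Y. \<rho> (s y) = y)"
    and "dense_ucc F"
  shows "(compact_open X Y) closure_of {\<rho> \<circ> f \<circ> \<phi> | f. f \<in> F}
           = topspace (compact_open X Y)"
proof -
  obtain s where s: "continuous_map Y euclidean s" "\<forall>y\<in>topspace Y. \<rho> (s y) = y"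
    using assms(7) by blast
  have "{\<rho> \<circ> f \<circ> \<phi> | f. f \<in> F} \<subseteq> {f. continuous_map X Y f}"
  proof clarify
    fix f assume "f \<in> F"
    then have "continuous_on UNIV f"
      using \<open>dense_ucc F\<close> unfolding dense_ucc_def by blast
    then show "continuous_map X Y (\<rho> \<circ> f \<circ> \<phi>)"
      by (intro continuous_map_compose[OF _ assms(5)] continuous_map_compose[OF assms(3)]) simp
  qed
  moreover have "\<exists>h\<in>{\<rho> \<circ> f \<circ> \<phi> | f. f \<in> F}. \<forall>(K, U)\<in>A. h ` K \<subseteq> U"
    if g: "continuous_map X Y g"
      and A: "finite A" "\<forall>(K, U)\<in>A. compactin X K \<and> openin Y U \<and> g ` K \<subseteq> U"
    for g A
  proof -
    obtain f where "f \<in> F" "\<forall>(K, U)\<in>A. (\<rho> \<circ> f \<circ> \<phi>) ` K \<subseteq> U"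
      by (rule dense_ucc_composite_approximates[OF assms(3,4,5) s assms(8) g A])
    then show ?thesis
      by (intro bexI[of _ "\<rho> \<circ> f \<circ> \<phi>"]) blast+
  qed
  ultimately show ?thesis
    by (rule compact_open_closure_of_eq_topspace)
qed

end
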